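(* Let $0<t_1<T$. Let $\sigma$ be a convex function on $\mathbb{R}^n$ and let $H(t,p)$ be a continuously differentiable function on $[t_1,T]\times\mathbb{R}^n$ satisfying conditions (A1) and (A2) on $[t_1,T]\times\mathbb{R}^n$ (with $a=t_1$, $b=T$). Then the function $$u(t,x)=\Big(\sigma^*+\int_{t_1}^t H(\tau,\cdot)\,d\tau\Big)^*(x)=\max_{q\in\mathbb{R}^n}\Big\{\langle x,q\rangle-\sigma^*(q)-\int_{t_1}^t H(\tau,q)\,d\tau\Big\}$$ is a viscosity solution of the Cauchy problem $u_t+H(t,D_xu)=0$ in $(t_1,T)\times\mathbb{R}^n$, $u(t_1,x)=\sigma(x)$, $x\in\mathbb{R}^n$.
   Context: For a function $f:\mathbb{R}^n\to\mathbb{R}\cup\{+\infty\}$, $f^*(y)=\sup_{q\in\mathbb{R}^n}\{\langle y,q\rangle-f(q)\}$ denotes its Fenchel conjugate. Conditions on a strip $[a,b]\times\mathbb{R}^n$: (A1) for every $(t_0,x_0)\in[a,b]\times\mathbb{R}^n$ there exist constants $r>0$, $N>0$ such that $\langle x,p\rangle-\sigma^*(p)-\int_a^t H(\tau,p)d\tau<\max_{|q|\le N}\{\langle x,q\rangle-\sigma^*(q)-\int_a^tH(\tau,q)d\tau\}$ whenever $(t,x)\in[a,b]\times\mathbb{R}^n$, $|t-t_0|+|x-x_0|<r$ and $|p|>N$. (A2) $H$ has one of the two forms: (a) $H(t,\cdot)$ is convex for all $t\in[a,b]$, or $H(t,\cdot)$ is concave for all $t\in[a,b]$; (b) $H(t,p)=g(t)h(p)+k(t)$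 for some functions $g,h,k$, where $g(t)$ does not change its sign on $[a,b]$. A viscosity solution of the Cauchy problem $u_t+H(t,D_xu)=0$ in $(a,b)\times\mathbb{R}^n$, $u(a,x)=g(x)$, is a continuous $u:[a,b]\times\mathbb{R}^n\to\mathbb{R}$ with $u(a,\cdot)=g$ such that for every $v\in C^1((a,b)\times\mathbb{R}^n)$: if $u-v$ has a local maximum at $(t_0,x_0)\in(a,b)\times\mathbb{R}^n$ then $v_t(t_0,x_0)+H(t_0,D_xv(t_0,x_0))\le0$, and if $u-v$ has a local minimum there then $v_t(t_0,x_0)+H(t_0,D_xv(t_0,x_0))\ge0$. *)

theory Defs
  imports "HOL-Analysis.Analysis"
begin

definition fconj :: "('a::real_inner \<Rightarrow> real) \<Rightarrow> 'a \<Rightarrow> ereal" where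
  "fconj f y = (SUP q. ereal (inner y q - f q))"

definition cond_A1 :: "(real^'n \<Rightarrow> real) \<Rightarrow> (real \<Rightarrow> real^'n \<Rightarrow> real) \<Rightarrow> real \<Rightarrow> real \<Rightarrow> bool" where
  "cond_A1 \<sigma> H a b \<longleftrightarrow>
    (\<forall>t0\<in>{a..b}. \<forall>x0::real^'n. \<exists>r>0. \<exists>N>0.
       \<forall>t\<in>{a..b}. \<forall>x p. \<bar>t - t0\<bar> + norm (x - x0) < r \<and> norm p > N \<longrightarrow>
          ereal (inner x p) - fconj \<sigma> p - ereal (integral {a..t} (\<lambda>\<tau>. H \<tau> p))
          < (SUP q\<in>cball 0 N. ereal (inner x q) - fconj \<sigma> q - ereal (integral {a..t} (\<lambda>\<tau>. H \<tau> q))))"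

definition cond_A2 :: "(real \<Rightarrow> real^'n \<Rightarrow> real) \<Rightarrow> real \<Rightarrow> real \<Rightarrow> bool" where
  "cond_A2 H a b \<longleftrightarrow>
    ((\<forall>t\<in>{a..b}. convex_on UNIV (H t)) \<or> (\<forall>t\<in>{a..b}. concave_on UNIV (H t))) \<or>
    (\<exists>g h k. (\<forall>t\<in>{a..b}. \<forall>p. H t p = g t * h p + k t) \<and>
             ((\<forall>t\<in>{a..b}. g t \<ge> 0) \<or> (\<forall>t\<in>{a..b}. g t \<le> 0)))"

definition grad_x :: "((real \<times> (real^'n)) \<Rightarrow>\<^sub>L real) \<Rightarrow> real^'n" where
  "grad_x D = (\<chi> i. blinfun_apply D (0, axis i 1))"

definition time_deriv :: "((real \<times> (real^'n)) \<Rightarrow>\<^sub>L real) \<Rightarrow> real" where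
  "time_deriv D = blinfun_apply D (1, 0)"

definition viscosity_solution ::
  "(real \<Rightarrow> real^'n \<Rightarrow> real) \<Rightarrow> real \<Rightarrow> real \<Rightarrow> (real^'n \<Rightarrow> real) \<Rightarrow> (real \<Rightarrow> real^'n \<Rightarrow> real) \<Rightarrow> bool" where
  "viscosity_solution H a b g u \<longleftrightarrow>
    continuous_on ({a..b} \<times> UNIV) (\<lambda>(t,x). u t x) \<and>
    (\<forall>x. u a x = g x) \<and>
    (\<forall>(v :: real \<Rightarrow> real^'n \<Rightarrow> real) Dv.
       ((\<forall>z\<in>{a<..<b} \<times> UNIV. ((\<lambda>(t,x). v t x) has_derivative blinfun_apply (Dv z)) (at z))
        \<and> continuous_on ({a<..<b} \<times> UNIV) Dv) \<longrightarrow>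
       (\<forall>t0\<in>{a<..<b}. \<forall>x0.
          ((\<exists>e>0. \<forall>t x. dist (t,x) (t0,x0) < e \<longrightarrow> u t x - v t x \<le> u t0 x0 - v t0 x0) \<longrightarrow>
             time_deriv (Dv (t0,x0)) + H t0 (grad_x (Dv (t0,x0))) \<le> 0) \<and>
          ((\<exists>e>0. \<forall>t x. dist (t,x) (t0,x0) < e \<longrightarrow> u t x - v t x \<ge> u t0 x0 - v t0 x0) \<longrightarrow>
             time_deriv (Dv (t0,x0)) + H t0 (grad_x (Dv (t0,x0))) \<ge> 0)))"

end

theory Submission
  imports Defs
begin

text \<open>Write \<open>\<Phi>(t,x,q) = \<langle>x,q\<rangle> - \<sigma>\<^sup>*(q) - \<integral>\<^bsub>t\<^sub>1\<^esub>\<^sup>t H(\<tau>,q) d\<tau>\<close>, so that \<open>u = sup\<^sub>q \<Phi>\<close>.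
  Condition (A1) confines the maximizers of \<open>\<Phi>(t,x,\<cdot>)\<close> to a fixed ball near every point; since
  \<open>\<sigma>\<^sup>*\<close> is lower semicontinuous, the supremum is attained and \<open>u\<close> is continuous. A convex \<open>\<sigma>\<close> has
  subgradients, whence \<open>u(t\<^sub>1,\<cdot>) = \<sigma>\<^sup>*\<^sup>* = \<sigma>\<close>.

  If \<open>u - v\<close> has a local maximum at \<open>(t\<^sub>0,x\<^sub>0)\<close> and \<open>q\<^sub>0\<close> is a maximizer there, the smooth minorant
  \<open>\<Phi>(\<cdot>,\<cdot>,q\<^sub>0)\<close> of \<open>u\<close> touches \<open>u\<close> at \<open>(t\<^sub>0,x\<^sub>0)\<close>, which forces \<open>D\<^sub>xv = q\<^sub>0\<close> and \<open>v\<^sub>t = -H(t\<^sub>0,q\<^sub>0)\<close>.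
  If \<open>u - v\<close> has a local minimum, backward difference quotients along every direction \<open>(1,\<xi>)\<close>
  yield a maximizer \<open>q\<close> with \<open>\<langle>\<xi>, q - D\<^sub>xv\<rangle> - H(t\<^sub>0,q) \<le> v\<^sub>t\<close>. By a separation argument, \<open>D\<^sub>xv\<close>
  is then a convex combination \<open>\<Sum> \<lambda>\<^sub>i q\<^sub>i\<close> of maximizers with \<open>\<Sum> \<lambda>\<^sub>i H(t\<^sub>0,q\<^sub>i) \<ge> -v\<^sub>t\<close>. Convexity of
  \<open>\<sigma>\<^sup>*\<close> and maximality of the \<open>q\<^sub>i\<close> give \<open>\<Sum> \<lambda>\<^sub>i \<integral> H(\<tau>,q\<^sub>i) d\<tau> \<le> \<integral> H(\<tau>,\<Sum> \<lambda>\<^sub>i q\<^sub>i) d\<tau>\<close>; condition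
  (A2) makes the integrand of the difference one-signed, so the inequality also holds for the
  integrands at \<open>t\<^sub>0\<close>, i.e. \<open>v\<^sub>t + H(t\<^sub>0,D\<^sub>xv) \<ge> 0\<close>.\<close>

lemma fconj_ge: "ereal (inner p y - f y) \<le> fconj f p"
  unfolding fconj_def by (rule SUP_upper[where i=y]) simp

lemma fconj_neq_MInf: "fconj f p \<noteq> -\<infinity>"
  using fconj_ge[of p 0 f] by auto

lemma fenchel_young: "ereal (inner x q) - fconj f q \<le> ereal (f x)"
proof (cases "fconj f q")
  case (real r)
  have "ereal (inner q x - f x) \<le> ereal r" using fconj_ge[of q x f] real by simp
  then show ?thesis using real by (simp add: inner_commute)
qed (use fconj_neq_MInf in auto)

lemma fconj_lsc_seq:
  fixes f :: "'a::real_inner \<Rightarrow> real"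
  assumes q: "q \<longlonglongrightarrow> q0" and c: "c \<longlonglongrightarrow> c0"
    and le: "\<And>k. fconj f (q k) \<le> ereal (c k)"
  shows "fconj f q0 \<le> ereal c0"
  unfolding fconj_def
proof (rule SUP_least)
  fix y
  have "\<And>k. inner (q k) y - f y \<le> c k"
    using order_trans[OF fconj_ge le] by simp
  moreover have "(\<lambda>k. inner (q k) y - f y) \<longlonglongrightarrow> inner q0 y - f y"
    by (intro tendsto_intros q)
  ultimately have "inner q0 y - f y \<le> c0"
    using LIMSEQ_le[OF _ c] by blast
  then show "ereal (inner q0 y - f y) \<le> ereal c0" by simp
qed

lemma fconj_convex_combination:
  fixes f :: "'a::real_inner \<Rightarrow> real"
  assumes "finite I" "\<And>i. i \<in> I \<Longrightarrow> l i \<ge> 0" "sum l I = 1"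
    and "\<And>i. i \<in> I \<Longrightarrow> fconj f (q i) = ereal (c i)"
  shows "fconj f (\<Sum>i\<in>I. l i *\<^sub>R q i) \<le> ereal (\<Sum>i\<in>I. l i * c i)"
  unfolding fconj_def
proof (rule SUP_least)
  fix y
  have "inner (\<Sum>i\<in>I. l i *\<^sub>R q i) y - f y = (\<Sum>i\<in>I. l i * (inner (q i) y - f y))"
    using assms(3)
    by (simp add: inner_sum_left sum_subtractf right_diff_distrib sum_distrib_right[symmetric])
  also have "\<dots> \<le> (\<Sum>i\<in>I. l i * c i)"
  proof (rule sum_mono)
    fix i assume i: "i \<in> I"
    have "inner (q i) y - f y \<le> c i" using fconj_ge[of "q i" y f] assms(4)[OF i] by simp
    then show "l i * (inner (q i) y - f y) \<le> l i * c i"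
      using assms(2)[OF i] by (simp add: mult_left_mono)
  qed
  finally show "ereal (inner (\<Sum>i\<in>I. l i *\<^sub>R q i) y - f y) \<le> ereal (\<Sum>i\<in>I. l i * c i)"
    by simp
qed

text \<open>A supporting hyperplane of the epigraph at \<open>(x, \<sigma> x)\<close> cannot be vertical, because
  \<open>(x, \<sigma> x + 1)\<close> is an interior point of the epigraph.\<close>

lemma convex_on_subgradient:
  fixes \<sigma> :: "'a::euclidean_space \<Rightarrow> real"
  assumes cv: "convex_on UNIV \<sigma>"
  shows "\<exists>q. \<forall>y. \<sigma> x + inner q (y - x) \<le> \<sigma> y"
proof -
  define E where "E = epigraph UNIV \<sigma>"
  have cE: "convex E" unfolding E_def using cv by (simp add: convex_epigraph)
  have cont: "continuous_on UNIV \<sigma>" using convex_on_continuous[OF open_UNIV cv] .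
  have c1: "continuous_on UNIV (\<lambda>z::'a \<times> real. \<sigma> (fst z))"
    by (rule continuous_on_compose2[OF cont continuous_on_fst[OF continuous_on_id]]) simp
  have "open {z :: 'a \<times> real. \<sigma> (fst z) < snd z}"
    by (rule open_Collect_less[OF c1 continuous_on_snd[OF continuous_on_id]])
  moreover have "{z :: 'a \<times> real. \<sigma> (fst z) < snd z} \<subseteq> E"
    unfolding E_def epigraph_def by auto
  moreover have "(x, \<sigma> x + 1) \<in> {z :: 'a \<times> real. \<sigma> (fst z) < snd z}" by simp
  ultimately have "(x, \<sigma> x + 1) \<in> interior E" using interior_maximal by blast
  then have "interior E \<noteq> {}" by blast
  then have ri: "rel_interior E = interior E"
    by (intro rel_interior_interior affine_hull_nonempty_interior)
  have xin: "(x, \<sigma> x) \<in> E" unfolding E_def by (simp add: mem_epigraph)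
  have "(x, \<sigma> x) \<notin> interior E"
  proof
    assume "(x, \<sigma> x) \<in> interior E"
    then obtain e where e: "e > 0" "ball (x, \<sigma> x) e \<subseteq> E"
      unfolding mem_interior by blast
    have "(x, \<sigma> x - e/2) \<in> ball (x, \<sigma> x) e" using e(1)
      by (simp add: dist_Pair_Pair dist_real_def)
    then have "(x, \<sigma> x - e/2) \<in> E" using e(2) by blast
    then show False using e(1) unfolding E_def by (simp add: mem_epigraph)
  qed
  then have xr: "(x, \<sigma> x) \<notin> rel_interior E" using ri by simp
  have xc: "(x, \<sigma> x) \<in> closure E" using closure_subset xin by blast
  obtain a where a: "a \<noteq> 0" "\<And>y. y \<in> closure E \<Longrightarrow> a \<bullet> (x, \<sigma> x) \<le> a \<bullet> y"
    "\<And>y. y \<in> rel_interior E \<Longrightarrow> a \<bullet> (x, \<sigma> x) < a \<bullet> y"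
    using supporting_hyperplane_relative_frontier[OF cE xc xr] by blast
  obtain \<alpha> \<beta> where ab: "a = (\<alpha>, \<beta>)" by (cases a)
  have key: "inner \<alpha> x + \<beta> * \<sigma> x \<le> inner \<alpha> y + \<beta> * s" if "\<sigma> y \<le> s" for y s
  proof -
    have "(y, s) \<in> E" using that unfolding E_def by (simp add: mem_epigraph)
    then have "(y, s) \<in> closure E" using closure_subset by blast
    then show ?thesis using a(2)[of "(y,s)"] ab by (simp add: inner_Pair)
  qed
  have "\<beta> \<ge> 0" using key[of x "\<sigma> x + 1"] by (simp add: distrib_left)
  moreover have "\<beta> \<noteq> 0"
  proof
    assume "\<beta> = 0"
    then have "inner \<alpha> x \<le> inner \<alpha> (x - \<alpha>)" using key[of "x - \<alpha>" "\<sigma> (x - \<alpha>)"] by simp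
    then have "inner \<alpha> \<alpha> \<le> 0" by (simp add: inner_diff_right)
    then have "\<alpha> = 0" by (meson inner_gt_zero_iff not_le)
    with \<open>\<beta> = 0\<close> ab a(1) show False by (simp add: zero_prod_def)
  qed
  ultimately have bp: "\<beta> > 0" by simp
  show ?thesis
  proof (intro exI allI)
    fix y
    have "\<beta> * \<sigma> x + inner \<alpha> (x - y) \<le> \<beta> * \<sigma> y"
      using key[of y "\<sigma> y"] by (simp add: inner_diff_right)
    then have "\<sigma> x + inner ((1/\<beta>) *\<^sub>R \<alpha>) (x - y) \<le> \<sigma> y" using bp
      by (simp add: field_simps)
    then show "\<sigma> x + inner (- (1/\<beta>) *\<^sub>R \<alpha>) (y - x) \<le> \<sigma> y"
      by (simp add: inner_diff_right inner_diff_left)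
  qed
qed

lemma fenchel_young_equality_exists:
  fixes \<sigma> :: "'a::euclidean_space \<Rightarrow> real"
  assumes "convex_on UNIV \<sigma>"
  shows "\<exists>q. fconj \<sigma> q = ereal (inner x q - \<sigma> x)"
proof -
  obtain q where q: "\<And>y. \<sigma> x + inner q (y - x) \<le> \<sigma> y"
    using convex_on_subgradient[OF assms] by blast
  have "fconj \<sigma> q \<le> ereal (inner x q - \<sigma> x)"
    unfolding fconj_def
  proof (rule SUP_least)
    fix y show "ereal (inner q y - \<sigma> y) \<le> ereal (inner x q - \<sigma> x)"
      using q[of y] by (simp add: inner_diff_right inner_commute)
  qed
  moreover have "ereal (inner x q - \<sigma> x) \<le> fconj \<sigma> q"
    using fconj_ge[of q x \<sigma>] by (simp add: inner_commute)
  ultimately show ?thesis by (intro exI[of _ q]) simp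
qed

lemma blinfun_apply_time_grad:
  fixes D :: "(real \<times> (real^'n)) \<Rightarrow>\<^sub>L real"
  shows "blinfun_apply D (a, \<xi>) = a * time_deriv D + inner (grad_x D) \<xi>"
proof -
  have "(\<Sum>i\<in>UNIV. (\<xi> $ i) *\<^sub>R (0::real, axis i (1::real))) = (0, \<Sum>i\<in>UNIV. (\<xi> $ i) *\<^sub>R axis i 1)"
    by (simp add: prod_eq_iff fst_sum snd_sum)
  also have "(\<Sum>i\<in>UNIV. (\<xi> $ i) *\<^sub>R axis i (1::real)) = \<xi>"
    using basis_expansion[of \<xi>] by (simp add: scalar_mult_eq_scaleR)
  finally have "(a, \<xi>) = a *\<^sub>R (1, 0) + (\<Sum>i\<in>UNIV. (\<xi> $ i) *\<^sub>R (0, axis i 1))"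
    by simp
  then have "blinfun_apply D (a, \<xi>)
      = a * blinfun_apply D (1, 0) + (\<Sum>i\<in>UNIV. \<xi> $ i * blinfun_apply D (0, axis i 1))"
    by (simp only: blinfun.add_right blinfun.sum_right blinfun.scaleR_right real_scaleR_def)
  also have "(\<Sum>i\<in>UNIV. \<xi> $ i * blinfun_apply D (0, axis i 1)) = inner (grad_x D) \<xi>"
    unfolding grad_x_def inner_vec_def by (simp add: mult.commute)
  finally show ?thesis unfolding time_deriv_def .
qed

lemma has_derivative_backward_quotient_seq:
  fixes v :: "real \<Rightarrow> real^'n \<Rightarrow> real"
  assumes D: "((\<lambda>(t,x). v t x) has_derivative blinfun_apply D) (at (t0, x0))"
    and s: "\<And>k. s k \<noteq> 0" "s \<longlonglongrightarrow> 0"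
  shows "(\<lambda>k. (v (t0 - s k) (x0 - s k *\<^sub>R \<xi>) - v t0 x0) / s k) \<longlonglongrightarrow> - blinfun_apply D (1, \<xi>)"
proof -
  define \<gamma> where "\<gamma> h = (t0, x0) - h *\<^sub>R (1::real, \<xi>)" for h :: real
  have "(\<gamma> has_derivative (\<lambda>h. - (h *\<^sub>R (1, \<xi>)))) (at 0)"
    unfolding \<gamma>_def by (intro derivative_eq_intros) auto
  then have "((\<lambda>h. (\<lambda>(t,x). v t x) (\<gamma> h)) has_derivative (\<lambda>h. blinfun_apply D (- (h *\<^sub>R (1, \<xi>))))) (at 0)"
    by (rule has_derivative_compose) (use D in \<open>simp add: \<gamma>_def\<close>)
  moreover have "blinfun_apply D (- (h *\<^sub>R (1, \<xi>))) = - blinfun_apply D (1, \<xi>) * h" for h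
    by (simp only: blinfun.minus_right blinfun.scaleR_right) simp
  ultimately have "((\<lambda>h. (\<lambda>(t,x). v t x) (\<gamma> h)) has_field_derivative - blinfun_apply D (1, \<xi>)) (at 0)"
    by (simp only: has_field_derivative_def)
  then have "((\<lambda>h. ((\<lambda>(t,x). v t x) (\<gamma> h) - (\<lambda>(t,x). v t x) (\<gamma> 0)) / (h - 0))
      \<longlongrightarrow> - blinfun_apply D (1, \<xi>)) (at 0)"
    by (simp only: has_field_derivative_iff)
  moreover have "filterlim s (at 0) sequentially"
    using s by (simp add: filterlim_at)
  ultimately have "(\<lambda>k. ((\<lambda>(t,x). v t x) (\<gamma> (s k)) - (\<lambda>(t,x). v t x) (\<gamma> 0)) / (s k - 0))
      \<longlonglongrightarrow> - blinfun_apply D (1, \<xi>)"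
    by (rule filterlim_compose)
  then show ?thesis by (simp add: \<gamma>_def)
qed

lemma integral_one_signed_nonpos_imp_nonpos:
  fixes \<phi> :: "real \<Rightarrow> real"
  assumes c: "continuous_on {a..b} \<phi>" and ab: "a < b" and i: "integral {a..b} \<phi> \<le> 0"
    and sg: "(\<forall>\<tau>\<in>{a..b}. \<phi> \<tau> \<ge> 0) \<or> (\<forall>\<tau>\<in>{a..b}. \<phi> \<tau> \<le> 0)"
  shows "\<phi> b \<le> 0"
  using sg
proof
  assume pos: "\<forall>\<tau>\<in>{a..b}. \<phi> \<tau> \<ge> 0"
  have int: "\<phi> integrable_on {a..b}" by (rule integrable_continuous_interval[OF c])
  have "0 \<le> integral {a..b} \<phi>" by (rule integral_nonneg[OF int]) (use pos in auto)
  with i have "(\<phi> has_integral 0) (cbox a b)" using integrable_integral[OF int] by simp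
  then have "\<phi> b = 0"
    by (rule has_integral_0_cbox_imp_0[rotated 2]) (use c pos ab in auto)
  then show ?thesis by simp
qed (use ab in auto)

lemma frequently_sequentially_imp_strict_mono:
  assumes "frequently P sequentially"
  shows "\<exists>r :: nat \<Rightarrow> nat. strict_mono r \<and> (\<forall>n. P (r n))"
proof -
  have "infinite {n. P n}"
    using assms by (simp add: frequently_cofinite[symmetric] cofinite_eq_sequentially)
  then show ?thesis using infinite_enumerate by blast
qed

text \<open>If \<open>(0, a)\<close> were outside \<open>conv P + {0} \<times> [0,\<infinity>)\<close>, a separating hyperplane \<open>(\<xi>', \<beta>)\<close>
  would yield the direction \<open>\<xi>' / \<beta>\<close> (or a large multiple of \<open>\<xi>'\<close> if \<open>\<beta> = 0\<close>) violating the
  hypothesis.\<close>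

lemma convex_hull_meets_vertical_ray:
  fixes P :: "('a::euclidean_space \<times> real) set"
  assumes "compact P" and dir: "\<And>\<xi>. \<exists>z\<in>P. inner \<xi> (fst z) + snd z \<le> a"
  shows "\<exists>\<rho>\<ge>0. (0, a - \<rho>) \<in> convex hull P"
proof -
  define R where "R = {0::'a} \<times> {0::real..}"
  define C where "C = (\<Union>x\<in>convex hull P. \<Union>y\<in>R. {x + y})"
  have "(0, a) \<in> C"
  proof (rule ccontr)
    assume "(0, a) \<notin> C"
    moreover have "closed C"
      unfolding C_def R_def by (intro compact_closed_sums compact_convex_hull assms(1) closed_Times) auto
    moreover have "convex C"
      unfolding C_def R_def by (intro convex_sums convex_convex_hull convex_Times) auto
    ultimately obtain w b where wb: "inner w (0, a) < b" "\<forall>z\<in>C. b < inner w z"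
      using separating_hyperplane_closed_point by blast
    obtain \<xi>' \<beta> where w: "w = (\<xi>', \<beta>)" by (cases w)
    have key: "b < inner \<xi>' (fst z) + \<beta> * (snd z + \<rho>)" if "z \<in> P" "\<rho> \<ge> 0" for z \<rho>
    proof -
      have "z + (0, \<rho>) \<in> C"
        unfolding C_def R_def using that hull_subset[of P convex] by blast
      then have "b < inner (\<xi>', \<beta>) (z + (0, \<rho>))" using wb(2) unfolding w by blast
      then show ?thesis by (cases z) (simp add: inner_Pair algebra_simps)
    qed
    have wa: "\<beta> * a < b" using wb(1) unfolding w by (simp add: inner_Pair)
    consider "\<beta> < 0" | "\<beta> = 0" | "\<beta> > 0" by linarith
    then show False
    proof cases
      case 1
      obtain z where z: "z \<in> P" using dir[of 0] by blast
      define \<rho> where "\<rho> = max 0 ((inner \<xi>' (fst z) + \<beta> * snd z - b) / - \<beta>)"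
      have "inner \<xi>' (fst z) + \<beta> * (snd z + \<rho>) \<le> b"
        using 1 by (auto simp: \<rho>_def max_def field_simps)
      then show False using key[OF z, of \<rho>] by (simp add: \<rho>_def)
    next
      case 2
      have "bounded (snd ` P)"
        by (intro compact_imp_bounded compact_continuous_image continuous_intros assms(1))
      then obtain B where B: "\<And>z. z \<in> P \<Longrightarrow> \<bar>snd z\<bar> \<le> B"
        unfolding bounded_iff by auto
      have b0: "b > 0" using wa 2 by simp
      define r where "r = (\<bar>a\<bar> + B + 1) / b"
      obtain z where z: "z \<in> P" "inner (r *\<^sub>R \<xi>') (fst z) + snd z \<le> a"
        using dir by blast
      have "r > 0" using b0 B[OF z(1)] by (simp add: r_def)
      then have "r * b < r * inner \<xi>' (fst z)"
        using key[OF z(1), of 0] 2 by simp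
      moreover have "r * b = \<bar>a\<bar> + B + 1" using b0 by (simp add: r_def)
      ultimately show False using z(2) B[OF z(1)] by simp
    next
      case 3
      obtain z where z: "z \<in> P" "inner ((1/\<beta>) *\<^sub>R \<xi>') (fst z) + snd z \<le> a"
        using dir by blast
      then have "inner \<xi>' (fst z) + \<beta> * snd z \<le> \<beta> * a"
        using 3 by (simp add: field_simps)
      then show False using key[OF z(1), of 0] wa by simp
    qed
  qed
  then obtain k \<rho> where k: "k \<in> convex hull P" "\<rho> \<ge> 0" "(0, a) = k + (0, \<rho>)"
    unfolding C_def R_def by auto
  then have "k = (0, a - \<rho>)" by (auto simp: prod_eq_iff)
  with k show ?thesis by blast
qed

lemma convex_combination_from_directional_bounds:
  fixes Q :: "'a::euclidean_space set" and g :: "'a \<Rightarrow> real"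
  assumes "compact Q" "continuous_on Q g"
    and dir: "\<And>\<xi>. \<exists>q\<in>Q. inner \<xi> (q - p) + g q \<le> a"
  shows "\<exists>S l. finite S \<and> S \<subseteq> Q \<and> (\<forall>q\<in>S. 0 \<le> l q) \<and> sum l S = 1 \<and>
           p = (\<Sum>q\<in>S. l q *\<^sub>R q) \<and> (\<Sum>q\<in>S. l q * g q) \<le> a"
proof -
  define f where "f q = (q - p, g q)" for q
  have "compact (f ` Q)"
    unfolding f_def by (intro compact_continuous_image continuous_intros assms(1,2))
  then obtain \<rho> where "\<rho> \<ge> 0" "(0, a - \<rho>) \<in> convex hull (f ` Q)"
    using convex_hull_meets_vertical_ray[of "f ` Q" a] dir unfolding f_def by fastforce
  then obtain S' w where S': "finite S'" "S' \<subseteq> f ` Q" "\<forall>z\<in>S'. 0 \<le> w z" "sum w S' = 1"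
      "(\<Sum>z\<in>S'. w z *\<^sub>R z) = (0, a - \<rho>)"
    unfolding convex_hull_explicit by blast
  define S where "S = {q \<in> Q. f q \<in> S'}"
  have inj: "inj_on f S" unfolding inj_on_def f_def by auto
  have S'_eq: "S' = f ` S" using S'(2) unfolding S_def by blast
  define l where "l q = w (f q)" for q
  have sums: "(\<Sum>q\<in>S. l q *\<^sub>R f q) = (0, a - \<rho>)" "sum l S = 1"
    using S'(4,5) sum.reindex[OF inj, of "\<lambda>z. w z *\<^sub>R z"] sum.reindex[OF inj, of w]
    by (simp_all add: S'_eq l_def o_def)
  have "(\<Sum>q\<in>S. l q *\<^sub>R (q - p)) = 0" "(\<Sum>q\<in>S. l q * g q) = a - \<rho>"
    using sums(1) by (simp_all add: f_def prod_eq_iff fst_sum snd_sum)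
  then have "p = (\<Sum>q\<in>S. l q *\<^sub>R q)" "(\<Sum>q\<in>S. l q * g q) \<le> a"
    using sums(2) \<open>\<rho> \<ge> 0\<close> by (simp_all add: scaleR_diff_right sum_subtractf scaleR_sum_left[symmetric])
  moreover have "finite S" using S'(1) inj S'_eq finite_image_iff by blast
  moreover have "S \<subseteq> Q" "\<forall>q\<in>S. 0 \<le> l q" using S'(3) unfolding S_def l_def by auto
  ultimately show ?thesis using sums(2) by blast
qed

locale hopf_formula =
  fixes \<sigma> :: "real^'n \<Rightarrow> real" and H :: "real \<Rightarrow> real^'n \<Rightarrow> real" and t1 T :: real
  assumes t1_less_T: "t1 < T" and convex_\<sigma>: "convex_on UNIV \<sigma>"
    and continuous_H: "continuous_on ({t1..T} \<times> UNIV) (\<lambda>(t,p). H t p)"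
    and A1: "cond_A1 \<sigma> H t1 T" and A2: "cond_A2 H t1 T"
begin

definition G :: "real \<Rightarrow> real^'n \<Rightarrow> real" where
  "G t q = integral {t1..t} (\<lambda>\<tau>. H \<tau> q)"

lemma continuous_on_H_time: "continuous_on {t1..T} (\<lambda>\<tau>. H \<tau> q)"
proof -
  have "continuous_on {t1..T} ((\<lambda>(t,p). H t p) \<circ> (\<lambda>\<tau>. (\<tau>, q)))"
    by (rule continuous_on_compose[OF _ continuous_on_subset[OF continuous_H]])
       (auto intro!: continuous_intros)
  then show ?thesis by (simp add: o_def)
qed

lemma continuous_on_H_space:
  assumes "t \<in> {t1..T}"
  shows "continuous_on UNIV (H t)"
proof -
  have "continuous_on UNIV ((\<lambda>(t,p). H t p) \<circ> (\<lambda>q. (t, q)))"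
    by (rule continuous_on_compose[OF _ continuous_on_subset[OF continuous_H]])
       (use assms in \<open>auto intro!: continuous_intros\<close>)
  then show ?thesis by (simp add: o_def)
qed

lemma integrable_H: "{a..b} \<subseteq> {t1..T} \<Longrightarrow> (\<lambda>\<tau>. H \<tau> q) integrable_on {a..b}"
  by (rule integrable_continuous_interval, rule continuous_on_subset[OF continuous_on_H_time])

lemma G_diff:
  assumes "t1 \<le> s" "s \<le> t" "t \<le> T"
  shows "G t q - G s q = integral {s..t} (\<lambda>\<tau>. H \<tau> q)"
  using Henstock_Kurzweil_Integration.integral_combine[OF assms(1,2) integrable_H[of t1 t q]] assms unfolding G_def by auto

lemma continuous_on_G_time: "continuous_on {t1..T} (\<lambda>t. G t q)"
  unfolding G_def by (rule indefinite_integral_continuous_1[OF integrable_H]) simp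

lemma G_has_real_derivative:
  assumes "t0 \<in> {t1<..<T}"
  shows "((\<lambda>t. G t q) has_real_derivative H t0 q) (at t0)"
proof -
  have "((\<lambda>t. G t q) has_vector_derivative H t0 q) (at t0 within {t1..T})"
    unfolding G_def by (rule integral_has_vector_derivative[OF continuous_on_H_time]) (use assms in auto)
  moreover have "at t0 within {t1..T} = at t0"
    by (rule at_within_interior) (use assms in auto)
  ultimately show ?thesis by (simp add: has_real_derivative_iff_has_vector_derivative)
qed

lemma H_bounded: "\<exists>B\<ge>0. \<forall>\<tau>\<in>{t1..T}. \<forall>q\<in>cball 0 N. \<bar>H \<tau> q\<bar> \<le> B"
proof -
  have "compact ((\<lambda>(t,p). H t p) ` ({t1..T} \<times> cball 0 N))"
    by (intro compact_continuous_image continuous_on_subset[OF continuous_H] compact_Times) auto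
  then obtain B where "\<forall>y\<in>(\<lambda>(t,p). H t p) ` ({t1..T} \<times> cball 0 N). norm y \<le> B"
    using compact_imp_bounded bounded_iff by metis
  then show ?thesis by (intro exI[of _ "max B 0"]) force
qed

lemma G_bounded: "\<exists>B. \<forall>t\<in>{t1..T}. \<forall>q\<in>cball 0 N. \<bar>G t q\<bar> \<le> B"
proof -
  obtain B where B: "B \<ge> 0" "\<forall>\<tau>\<in>{t1..T}. \<forall>q\<in>cball 0 N. \<bar>H \<tau> q\<bar> \<le> B"
    using H_bounded[of N] by blast
  have "\<bar>G t q\<bar> \<le> B * (T - t1)" if t: "t \<in> {t1..T}" and q: "q \<in> cball 0 N" for t q
  proof -
    have "norm (integral {t1..t} (\<lambda>\<tau>. H \<tau> q)) \<le> B * (t - t1)"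
      by (rule integral_bound) (use t q B(2) in \<open>auto intro: continuous_on_subset[OF continuous_on_H_time]\<close>)
    also have "\<dots> \<le> B * (T - t1)" using t B(1) by (intro mult_left_mono) auto
    finally show ?thesis by (simp add: G_def)
  qed
  then show ?thesis by blast
qed

lemma G_tendsto:
  assumes tk: "\<And>k. tk k \<in> {t1..T}" "t \<in> {t1..T}" "tk \<longlonglongrightarrow> t" and qk: "qk \<longlonglongrightarrow> q"
  shows "(\<lambda>k. G (tk k) (qk k)) \<longlonglongrightarrow> G t q"
proof -
  have "(\<lambda>k. G (tk k) q) \<longlonglongrightarrow> G t q"
    by (rule continuous_on_tendsto_compose[OF continuous_on_G_time tk(3) tk(2)]) (use tk(1) in auto)
  moreover have "(\<lambda>k. G (tk k) (qk k) - G (tk k) q) \<longlonglongrightarrow> 0"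
  proof (rule LIMSEQ_I)
    fix r :: real assume r: "r > 0"
    define K where "K = {t1..T} \<times> cball q 1"
    have "uniformly_continuous_on K (\<lambda>(t,p). H t p)"
      unfolding K_def
      by (intro compact_uniformly_continuous continuous_on_subset[OF continuous_H] compact_Times) auto
    then obtain d where d: "d > 0" "\<forall>z\<in>K. \<forall>z'\<in>K. dist z' z < d \<longrightarrow>
        dist ((\<lambda>(t,p). H t p) z') ((\<lambda>(t,p). H t p) z) < r / (2 * (T - t1))"
      unfolding uniformly_continuous_on_def using r t1_less_T by (metis divide_pos_pos diff_gt_0_iff_gt zero_less_mult_iff zero_less_numeral)
    obtain N where N: "\<forall>k\<ge>N. norm (qk k - q) < min d 1"
      using LIMSEQ_D[OF qk, of "min d 1"] d(1) by auto
    have "norm (G (tk k) (qk k) - G (tk k) q - 0) \<le> r / (2 * (T - t1)) * (tk k - t1)" if "N \<le> k" for k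
    proof -
      have H_close: "\<bar>H \<tau> (qk k) - H \<tau> q\<bar> \<le> r / (2 * (T - t1))" if "\<tau> \<in> {t1..T}" for \<tau>
      proof -
        have "(\<tau>, qk k) \<in> K" "(\<tau>, q) \<in> K" "dist (\<tau>, qk k) (\<tau>, q) < d"
          using N \<open>N \<le> k\<close> that by (auto simp: K_def dist_norm norm_minus_commute dist_Pair_Pair)
        then show ?thesis using d(2) by (fastforce simp: dist_real_def)
      qed
      have "G (tk k) (qk k) - G (tk k) q = integral {t1..tk k} (\<lambda>\<tau>. H \<tau> (qk k) - H \<tau> q)"
        unfolding G_def by (rule integral_diff[symmetric]) (use tk(1)[of k] in \<open>auto intro!: integrable_H\<close>)
      also have "norm \<dots> \<le> r / (2 * (T - t1)) * (tk k - t1)"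
        by (rule integral_bound)
          (use tk(1)[of k] H_close in \<open>auto intro!: continuous_intros continuous_on_subset[OF continuous_on_H_time]\<close>)
      finally show ?thesis by simp
    qed
    moreover have "r / (2 * (T - t1)) * (tk k - t1) < r" for k
    proof -
      have "r / (2 * (T - t1)) * (tk k - t1) \<le> r / (2 * (T - t1)) * (T - t1)"
        using tk(1)[of k] r t1_less_T by (intro mult_left_mono) auto
      also have "\<dots> = r / 2" using t1_less_T by (simp add: divide_simps)
      finally show ?thesis using r by linarith
    qed
    ultimately show "\<exists>N. \<forall>k\<ge>N. norm (G (tk k) (qk k) - G (tk k) q - 0) < r"
      by (meson le_less_trans)
  qed
  ultimately show ?thesis using tendsto_add by fastforce
qed

lemma G_backward_quotient_tendsto:
  assumes t0: "t0 \<in> {t1<..T}" and s: "\<And>k. s k > 0" "\<And>k. t1 \<le> t0 - s k" "s \<longlonglongrightarrow> 0"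
    and q: "q \<longlonglongrightarrow> q0"
  shows "(\<lambda>k. (G t0 (q k) - G (t0 - s k) (q k)) / s k) \<longlonglongrightarrow> H t0 q0"
proof (rule LIMSEQ_I)
  fix r :: real assume r: "r > 0"
  from continuous_H t0 r obtain d where d: "d > 0" "\<forall>z\<in>{t1..T} \<times> UNIV. dist z (t0, q0) < d \<longrightarrow>
      dist ((\<lambda>(t,p). H t p) z) ((\<lambda>(t,p). H t p) (t0,q0)) < r/2"
    unfolding continuous_on_iff by (metis UNIV_I mem_Sigma_iff greaterThanAtMost_iff atLeastAtMost_iff
        less_imp_le half_gt_zero)
  obtain N1 where N1: "\<forall>k\<ge>N1. norm (s k - 0) < d/2" using LIMSEQ_D[OF s(3), of "d/2"] d(1) by auto
  obtain N2 where N2: "\<forall>k\<ge>N2. norm (q k - q0) < d/2" using LIMSEQ_D[OF q, of "d/2"] d(1) by auto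
  have "norm ((G t0 (q k) - G (t0 - s k) (q k)) / s k - H t0 q0) < r" if k: "max N1 N2 \<le> k" for k
  proof -
    have H_close: "norm (H \<tau> (q k) - H t0 q0) \<le> r/2" if \<tau>: "\<tau> \<in> {t0 - s k..t0}" for \<tau>
    proof -
      have "dist (\<tau>, q k) (t0, q0) \<le> \<bar>\<tau> - t0\<bar> + norm (q k - q0)"
        using norm_Pair_le[of "\<tau> - t0" "q k - q0"] by (simp add: dist_norm)
      also have "\<dots> < d"
      proof -
        have "s k < d/2" "norm (q k - q0) < d/2" using N1 N2 k s(1)[of k] by auto
        then show ?thesis using \<tau> by auto
      qed
      finally show ?thesis using d(2) \<tau> s(2)[of k] t0 by (force simp: dist_real_def)
    qed
    have "G t0 (q k) - G (t0 - s k) (q k) - s k * H t0 q0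
        = integral {t0 - s k..t0} (\<lambda>\<tau>. H \<tau> (q k) - H t0 q0)"
    proof -
      have "integral {t0 - s k..t0} (\<lambda>\<tau>. H \<tau> (q k) - H t0 q0)
          = integral {t0 - s k..t0} (\<lambda>\<tau>. H \<tau> (q k)) - integral {t0 - s k..t0} (\<lambda>\<tau>. H t0 q0)"
        by (rule integral_diff) (use integrable_H[of "t0 - s k" t0] s(1,2)[of k] t0 in auto)
      then show ?thesis using G_diff[of "t0 - s k" t0 "q k"] s(1,2)[of k] t0 by simp
    qed
    also have "norm \<dots> \<le> r/2 * (t0 - (t0 - s k))"
      by (rule integral_bound)
        (use s(1,2)[of k] t0 H_close in \<open>auto intro!: continuous_intros continuous_on_subset[OF continuous_on_H_time]\<close>)
    finally have "\<bar>(G t0 (q k) - G (t0 - s k) (q k)) / s k - H t0 q0\<bar> \<le> r/2"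
      using s(1)[of k] by (simp add: divide_simps abs_divide mult.commute)
    then show ?thesis using r by simp
  qed
  then show "\<exists>N. \<forall>k\<ge>N. norm ((G t0 (q k) - G (t0 - s k) (q k)) / s k - H t0 q0) < r"
    by blast
qed

definition Phi :: "real \<Rightarrow> real^'n \<Rightarrow> real^'n \<Rightarrow> ereal" where
  "Phi t x q = ereal (inner x q) - fconj \<sigma> q - ereal (G t q)"

text \<open>On the strip the supremum is finite (lemma \<open>SUP_Phi_eq_u\<close> below), so nothing is lost by
  taking its real part.\<close>

definition u :: "real \<Rightarrow> real^'n \<Rightarrow> real" where
  "u t x = real_of_ereal (SUP q. Phi t x q)"

lemma Phi_eq_ereal: "fconj \<sigma> q = ereal c \<Longrightarrow> Phi t x q = ereal (inner x q - c - G t q)"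
  by (simp add: Phi_def)

lemma ereal_le_Phi_iff: "ereal m \<le> Phi t x q \<longleftrightarrow> fconj \<sigma> q \<le> ereal (inner x q - G t q - m)"
proof (cases "fconj \<sigma> q")
  case (real c) then show ?thesis by (simp add: Phi_def) linarith
qed (simp_all add: Phi_def fconj_neq_MInf)

lemma Phi_le: "Phi t x q \<le> ereal (\<sigma> x - G t q)"
  using fenchel_young[of x q \<sigma>] unfolding Phi_def by (cases "fconj \<sigma> q") auto

lemma Phi_upper_semicontinuous:
  assumes tk: "\<And>k. tk k \<in> {t1..T}" "t \<in> {t1..T}" "tk \<longlonglongrightarrow> t" and xk: "xk \<longlonglongrightarrow> x"
    and qk: "qk \<longlonglongrightarrow> q" and m: "\<And>k. ereal (m k) \<le> Phi (tk k) (xk k) (qk k)" "m \<longlonglongrightarrow> m0"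
  shows "ereal m0 \<le> Phi t x q"
proof -
  have "fconj \<sigma> q \<le> ereal (inner x q - G t q - m0)"
  proof (rule fconj_lsc_seq[OF qk])
    show "(\<lambda>k. inner (xk k) (qk k) - G (tk k) (qk k) - m k) \<longlonglongrightarrow> inner x q - G t q - m0"
      by (intro tendsto_diff tendsto_inner xk qk G_tendsto[OF tk qk] m(2))
    show "fconj \<sigma> (qk k) \<le> ereal (inner (xk k) (qk k) - G (tk k) (qk k) - m k)" for k
      using m(1)[of k] by (simp add: ereal_le_Phi_iff)
  qed
  then show ?thesis by (simp add: ereal_le_Phi_iff)
qed

lemma SUP_Phi_attained:
  assumes t: "t \<in> {t1..T}" and N: "N \<ge> 0"
    and outside: "\<And>p. N < norm p \<Longrightarrow> Phi t x p < (SUP q\<in>cball 0 N. Phi t x q)"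
  shows "\<exists>q. norm q \<le> N \<and> Phi t x q = (SUP q. Phi t x q) \<and> (SUP q. Phi t x q) = ereal (u t x)"
proof -
  define S where "S = (SUP q\<in>cball 0 N. Phi t x q)"
  have SUP_eq: "(SUP q. Phi t x q) = S"
  proof (rule antisym)
    show "(SUP q. Phi t x q) \<le> S"
    proof (rule SUP_least)
      fix q
      show "Phi t x q \<le> S"
      proof (cases "norm q \<le> N")
        case True then show ?thesis unfolding S_def by (intro SUP_upper) simp
      next
        case False then show ?thesis using outside[of q] by (simp add: S_def)
      qed
    qed
    show "S \<le> (SUP q. Phi t x q)" unfolding S_def by (rule SUP_subset_mono) auto
  qed
  obtain p :: "real^'n" where "norm p = N + 1" using vector_choose_size[of "N + 1"] N by auto
  then have "S \<noteq> -\<infinity>" using outside[of p] by (auto simp: S_def)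
  moreover obtain B where B: "\<forall>t\<in>{t1..T}. \<forall>q\<in>cball 0 N. \<bar>G t q\<bar> \<le> B"
    using G_bounded by blast
  have "S \<le> ereal (\<sigma> x + B)"
    unfolding S_def
  proof (rule SUP_least)
    fix q :: "real^'n" assume "q \<in> cball 0 N"
    then have "ereal (\<sigma> x - G t q) \<le> ereal (\<sigma> x + B)" using B t by force
    then show "Phi t x q \<le> ereal (\<sigma> x + B)" using Phi_le order_trans by blast
  qed
  ultimately obtain s where s: "S = ereal s" by (cases S) auto
  have "\<exists>q\<in>cball 0 N. ereal (s - inverse (real (Suc k))) < Phi t x q" for k
  proof -
    have "ereal (s - inverse (real (Suc k))) < S" using s by simp
    then show ?thesis unfolding S_def less_SUP_iff .
  qed
  then obtain qs where qs: "\<And>k. qs k \<in> cball 0 N" "\<And>k. ereal (s - inverse (real (Suc k))) < Phi t x (qs k)"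
    by metis
  obtain l \<rho> where l: "l \<in> cball 0 N" "strict_mono \<rho>" "(qs \<circ> \<rho>) \<longlonglongrightarrow> l"
    using seq_compactE[OF compact_imp_seq_compact[OF compact_cball]] qs(1) by metis
  have "(\<lambda>k. inverse (real (Suc (\<rho> k)))) \<longlonglongrightarrow> 0"
    using LIMSEQ_subseq_LIMSEQ[OF LIMSEQ_inverse_real_of_nat l(2)] by (simp add: o_def)
  then have "(\<lambda>k. s - inverse (real (Suc (\<rho> k)))) \<longlonglongrightarrow> s - 0"
    by (intro tendsto_diff tendsto_const)
  then have "ereal (s - 0) \<le> Phi t x l"
    by (rule Phi_upper_semicontinuous[where tk="\<lambda>_. t" and xk="\<lambda>_. x" and qk="qs \<circ> \<rho>", rotated 6])
      (use qs(2) t l(3) less_imp_le in auto)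
  then have "ereal s \<le> Phi t x l" by simp
  moreover have "Phi t x l \<le> S" unfolding S_def by (rule SUP_upper[OF l(1)])
  ultimately show ?thesis using l(1) s SUP_eq by (intro exI[of _ l]) (simp add: u_def)
qed

lemma Phi_maximizers_local:
  assumes "t0 \<in> {t1..T}"
  obtains r N where "r > 0"
    "\<And>t x. t \<in> {t1..T} \<Longrightarrow> \<bar>t - t0\<bar> + norm (x - x0) < r \<Longrightarrow>
       (SUP q. Phi t x q) = ereal (u t x) \<and> (\<exists>q. Phi t x q = ereal (u t x)) \<and>
       (\<forall>q. Phi t x q = ereal (u t x) \<longrightarrow> norm q \<le> N)"
proof -
  obtain r N where r: "r > 0" "N > 0" and outside: "\<forall>t\<in>{t1..T}. \<forall>x p.
      \<bar>t - t0\<bar> + norm (x - x0) < r \<and> N < norm p \<longrightarrow> Phi t x p < (SUP q\<in>cball 0 N. Phi t x q)"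
    using A1 assms unfolding cond_A1_def Phi_def G_def by blast
  have "(SUP q. Phi t x q) = ereal (u t x) \<and> (\<exists>q. Phi t x q = ereal (u t x)) \<and>
       (\<forall>q. Phi t x q = ereal (u t x) \<longrightarrow> norm q \<le> N)"
    if t: "t \<in> {t1..T}" and near: "\<bar>t - t0\<bar> + norm (x - x0) < r" for t x
  proof -
    have "SUP_cball": "\<And>p. N < norm p \<Longrightarrow> Phi t x p < (SUP q\<in>cball 0 N. Phi t x q)"
      using outside t near by blast
    obtain q where "Phi t x q = (SUP q. Phi t x q)" "(SUP q. Phi t x q) = ereal (u t x)"
      using SUP_Phi_attained[OF t _ SUP_cball] r(2) by auto
    moreover have "norm p \<le> N" if "Phi t x p = (SUP q. Phi t x q)" for p
      using SUP_cball[of p] that SUP_subset_mono[of "cball 0 N" UNIV "Phi t x" "Phi t x"]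
      by (metis linorder_not_le order_less_le_trans order_less_irrefl subset_UNIV)
    ultimately show ?thesis by metis
  qed
  then show ?thesis using that r(1) by blast
qed

lemma Phi_maximizers_at:
  assumes "t \<in> {t1..T}"
  shows "(SUP q. Phi t x q) = ereal (u t x)" "\<exists>q. Phi t x q = ereal (u t x)"
proof -
  obtain r N where "r > 0" and local: "\<And>t' x'. t' \<in> {t1..T} \<Longrightarrow> \<bar>t' - t\<bar> + norm (x' - x) < r \<Longrightarrow>
      (SUP q. Phi t' x' q) = ereal (u t' x') \<and> (\<exists>q. Phi t' x' q = ereal (u t' x'))"
    using Phi_maximizers_local[OF assms, of x] by metis
  show "(SUP q. Phi t x q) = ereal (u t x)" "\<exists>q. Phi t x q = ereal (u t x)"
    using local[OF assms] \<open>r > 0\<close> by simp_all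
qed

lemma SUP_Phi_eq_u: "t \<in> {t1..T} \<Longrightarrow> (SUP q. Phi t x q) = ereal (u t x)"
  by (rule Phi_maximizers_at)

lemma Phi_le_u:
  assumes "t \<in> {t1..T}"
  shows "Phi t x q \<le> ereal (u t x)"
proof -
  have "Phi t x q \<le> (SUP q. Phi t x q)" by (rule SUP_upper) simp
  then show ?thesis using SUP_Phi_eq_u[OF assms] by simp
qed

lemma Phi_maximizer_exists: "t \<in> {t1..T} \<Longrightarrow> \<exists>q. Phi t x q = ereal (u t x)"
  by (rule Phi_maximizers_at)

lemma Phi_maximizer_fconj:
  assumes "Phi t x q = ereal (u t x)"
  obtains c where "fconj \<sigma> q = ereal c" "u t x = inner x q - c - G t q"
proof (cases "fconj \<sigma> q")
  case (real c)
  then have "u t x = inner x q - c - G t q" using assms by (simp add: Phi_def)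
  then show ?thesis using real that by blast
next
  case PInf
  then show ?thesis using assms by (simp add: Phi_def)
next
  case MInf
  then show ?thesis using fconj_neq_MInf by blast
qed

lemma u_initial: "u t1 x = \<sigma> x"
proof -
  have "Phi t1 x q \<le> ereal (\<sigma> x)" for q
    using Phi_le[of t1 x q] by (simp add: G_def)
  then have "(SUP q. Phi t1 x q) \<le> ereal (\<sigma> x)" by (rule SUP_least)
  moreover obtain q where "fconj \<sigma> q = ereal (inner x q - \<sigma> x)"
    using fenchel_young_equality_exists[OF convex_\<sigma>] by blast
  then have "Phi t1 x q = ereal (\<sigma> x)" by (simp add: Phi_eq_ereal G_def)
  moreover have "Phi t1 x q \<le> (SUP q. Phi t1 x q)" by (rule SUP_upper) simp
  ultimately have "(SUP q. Phi t1 x q) = ereal (\<sigma> x)" by simp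
  then show ?thesis by (simp add: u_def)
qed

lemma u_upper_semicontinuous:
  assumes tk: "\<And>k. tk k \<in> {t1..T}" "t \<in> {t1..T}" "tk \<longlonglongrightarrow> t" and xk: "xk \<longlonglongrightarrow> x"
    and freq: "frequently (\<lambda>k. a \<le> u (tk k) (xk k)) sequentially"
  shows "a \<le> u t x"
proof -
  obtain r N where r: "r > 0" and bounded: "\<And>t' x' q. t' \<in> {t1..T} \<Longrightarrow> \<bar>t' - t\<bar> + norm (x' - x) < r \<Longrightarrow>
      Phi t' x' q = ereal (u t' x') \<Longrightarrow> norm q \<le> N"
    using Phi_maximizers_local[OF tk(2), of x] by metis
  have "(\<lambda>k. \<bar>tk k - t\<bar> + norm (xk k - x)) \<longlonglongrightarrow> \<bar>t - t\<bar> + norm (x - x)"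
    by (intro tendsto_intros tk xk)
  then have "eventually (\<lambda>k. \<bar>tk k - t\<bar> + norm (xk k - x) < r) sequentially"
    using r by (intro order_tendstoD(2)) auto
  with freq have "frequently (\<lambda>k. a \<le> u (tk k) (xk k) \<and> \<bar>tk k - t\<bar> + norm (xk k - x) < r) sequentially"
    by (rule frequently_eventually_frequently)
  then obtain \<rho> :: "nat \<Rightarrow> nat" where "strict_mono \<rho>"
      "\<forall>n. a \<le> u (tk (\<rho> n)) (xk (\<rho> n)) \<and> \<bar>tk (\<rho> n) - t\<bar> + norm (xk (\<rho> n) - x) < r"
    using frequently_sequentially_imp_strict_mono by blast
  then have \<rho>: "strict_mono \<rho>" "\<And>n. a \<le> u (tk (\<rho> n)) (xk (\<rho> n))"
      "\<And>n. \<bar>tk (\<rho> n) - t\<bar> + norm (xk (\<rho> n) - x) < r"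
    by auto
  have "\<forall>n. \<exists>q. Phi (tk (\<rho> n)) (xk (\<rho> n)) q = ereal (u (tk (\<rho> n)) (xk (\<rho> n)))"
    using Phi_maximizer_exists tk(1) by blast
  then obtain qs where qs: "\<And>n. Phi (tk (\<rho> n)) (xk (\<rho> n)) (qs n) = ereal (u (tk (\<rho> n)) (xk (\<rho> n)))"
    by metis
  have "qs n \<in> cball 0 N" for n
    using bounded[OF tk(1) \<rho>(3) qs] by simp
  then obtain l \<rho>' where l: "strict_mono \<rho>'" "(qs \<circ> \<rho>') \<longlonglongrightarrow> l"
    using seq_compactE[OF compact_imp_seq_compact[OF compact_cball]] by metis
  have "ereal a \<le> Phi t x l"
  proof (rule Phi_upper_semicontinuous[where tk="tk \<circ> \<rho> \<circ> \<rho>'" and xk="xk \<circ> \<rho> \<circ> \<rho>'"])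
    show "(tk \<circ> \<rho> \<circ> \<rho>') \<longlonglongrightarrow> t" "(xk \<circ> \<rho> \<circ> \<rho>') \<longlonglongrightarrow> x"
      using LIMSEQ_subseq_LIMSEQ[OF _ strict_mono_o[OF \<rho>(1) l(1)]] tk(3) xk by (simp_all add: o_assoc)
    show "ereal a \<le> Phi ((tk \<circ> \<rho> \<circ> \<rho>') k) ((xk \<circ> \<rho> \<circ> \<rho>') k) ((qs \<circ> \<rho>') k)" for k
      using \<rho>(2) qs by simp
  qed (use tk l in \<open>auto simp: o_def\<close>)
  also have "\<dots> \<le> ereal (u t x)" by (rule Phi_le_u[OF tk(2)])
  finally show ?thesis by simp
qed

lemma u_tendsto:
  assumes tk: "\<And>k. tk k \<in> {t1..T}" "t \<in> {t1..T}" "tk \<longlonglongrightarrow> t" and xk: "xk \<longlonglongrightarrow> x"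
  shows "(\<lambda>k. u (tk k) (xk k)) \<longlonglongrightarrow> u t x"
proof (rule order_tendstoI)
  fix a assume "a < u t x"
  obtain q0 where q0: "Phi t x q0 = ereal (u t x)" using Phi_maximizer_exists[OF tk(2)] by blast
  then obtain c where c: "fconj \<sigma> q0 = ereal c" "u t x = inner x q0 - c - G t q0"
    by (rule Phi_maximizer_fconj)
  have "(\<lambda>k. inner (xk k) q0 - c - G (tk k) q0) \<longlonglongrightarrow> u t x"
    unfolding c(2) by (intro tendsto_diff tendsto_inner xk tendsto_const G_tendsto[OF tk])
  then have ev: "eventually (\<lambda>k. a < inner (xk k) q0 - c - G (tk k) q0) sequentially"
    using \<open>a < u t x\<close> order_tendstoD(1) by blast
  have le: "inner (xk k) q0 - c - G (tk k) q0 \<le> u (tk k) (xk k)" for k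
    using Phi_le_u[OF tk(1), of k "xk k" q0] by (simp add: Phi_eq_ereal[OF c(1)])
  from ev show "eventually (\<lambda>k. a < u (tk k) (xk k)) sequentially"
    by (rule eventually_mono) (rule less_le_trans[OF _ le])
next
  fix a assume "u t x < a"
  show "eventually (\<lambda>k. u (tk k) (xk k) < a) sequentially"
  proof (rule ccontr)
    assume "\<not> ?thesis"
    then have "frequently (\<lambda>k. a \<le> u (tk k) (xk k)) sequentially"
      by (simp add: not_eventually not_less)
    then have "a \<le> u t x" by (rule u_upper_semicontinuous[OF tk xk])
    with \<open>u t x < a\<close> show False by simp
  qed
qed

lemma continuous_on_u: "continuous_on ({t1..T} \<times> UNIV) (\<lambda>(t,x). u t x)"
proof (rule continuous_on_sequentiallyI)
  fix z :: "nat \<Rightarrow> real \<times> (real^'n)" and a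
  assume "\<forall>n. z n \<in> {t1..T} \<times> UNIV" "a \<in> {t1..T} \<times> UNIV" "z \<longlonglongrightarrow> a"
  then have "(\<lambda>k. u (fst (z k)) (snd (z k))) \<longlonglongrightarrow> u (fst a) (snd a)"
    by (intro u_tendsto tendsto_fst tendsto_snd) (auto simp: mem_Times_iff)
  then show "(\<lambda>n. (\<lambda>(t,x). u t x) (z n)) \<longlonglongrightarrow> (\<lambda>(t,x). u t x) a"
    by (simp add: case_prod_beta)
qed

lemma Phi_maximizer_limit:
  assumes tk: "\<And>k. tk k \<in> {t1..T}" "t \<in> {t1..T}" "tk \<longlonglongrightarrow> t" and xk: "xk \<longlonglongrightarrow> x"
    and qk: "\<And>k. Phi (tk k) (xk k) (qk k) = ereal (u (tk k) (xk k))" "qk \<longlonglongrightarrow> q"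
  shows "Phi t x q = ereal (u t x)"
proof (rule antisym)
  show "ereal (u t x) \<le> Phi t x q"
    using Phi_upper_semicontinuous[OF tk xk qk(2) _ u_tendsto[OF tk xk]] qk(1) by simp
qed (rule Phi_le_u[OF tk(2)])

lemma Phi_has_derivative:
  assumes "t0 \<in> {t1<..<T}"
  shows "((\<lambda>(t,x). inner x q - c - G t q) has_derivative (\<lambda>(h,\<xi>). inner \<xi> q - h * H t0 q)) (at (t0, x0))"
proof -
  have "((\<lambda>t. G t q) has_derivative (*) (H t0 q)) (at t0)"
    using G_has_real_derivative[OF assms, of q] by (simp add: has_field_derivative_def)
  then have "((\<lambda>z. G (fst z) q) has_derivative (\<lambda>z. H t0 q * fst z)) (at (t0, x0))"
    using has_derivative_compose[OF has_derivative_fst[OF has_derivative_ident]] by fastforce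
  then have "((\<lambda>z. inner (snd z) q - c - G (fst z) q) has_derivative
      (\<lambda>z. inner (snd z) q - 0 - H t0 q * fst z)) (at (t0, x0))"
    by (intro has_derivative_diff has_derivative_const derivative_eq_intros) auto
  then show ?thesis by (simp add: case_prod_beta' mult.commute)
qed

lemma u_subsolution:
  assumes t0: "t0 \<in> {t1<..<T}"
    and D: "((\<lambda>(t,x). v t x) has_derivative blinfun_apply Dv) (at (t0, x0))"
    and loc_max: "\<exists>e>0. \<forall>t x. dist (t,x) (t0,x0) < e \<longrightarrow> u t x - v t x \<le> u t0 x0 - v t0 x0"
  shows "time_deriv Dv + H t0 (grad_x Dv) \<le> 0"
proof -
  have t0': "t0 \<in> {t1..T}" using t0 by auto
  obtain q0 where "Phi t0 x0 q0 = ereal (u t0 x0)" using Phi_maximizer_exists[OF t0'] by blast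
  then obtain c where c: "fconj \<sigma> q0 = ereal c" "u t0 x0 = inner x0 q0 - c - G t0 q0"
    by (rule Phi_maximizer_fconj)
  define w where "w = (\<lambda>(t,x). inner x q0 - c - G t q0)"
  have w_le: "w (t, x) \<le> u t x" if "t \<in> {t1..T}" for t x
    using Phi_le_u[OF that, of x q0] by (simp add: w_def Phi_eq_ereal[OF c(1)])
  obtain e where e: "e > 0" "\<forall>t x. dist (t,x) (t0,x0) < e \<longrightarrow> u t x - v t x \<le> u t0 x0 - v t0 x0"
    using loc_max by blast
  define e' where "e' = min e (min (t0 - t1) (T - t0))"
  have "e' > 0" using e t0 by (simp add: e'_def)
  have centre: "(t0, x0) \<in> ball (t0, x0) e'" using \<open>e' > 0\<close> by simp
  have local_max: "w z - (\<lambda>(t,x). v t x) z \<le> w (t0, x0) - v t0 x0" if "z \<in> ball (t0, x0) e'" for z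
  proof (cases z)
    case (Pair t x)
    have "\<bar>t - t0\<bar> < e'"
      using that dist_fst_le[of z "(t0, x0)"] Pair by (simp add: dist_real_def dist_commute)
    then have "t \<in> {t1..T}" unfolding e'_def by auto
    moreover have "dist (t,x) (t0,x0) < e" using that Pair e'_def by (simp add: dist_commute)
    then have "u t x - v t x \<le> u t0 x0 - v t0 x0" using e(2) by blast
    moreover have "w (t0, x0) = u t0 x0" using c(2) by (simp add: w_def)
    ultimately show ?thesis using w_le[of t x] Pair by simp
  qed
  have "((\<lambda>z. w z - (\<lambda>(t,x). v t x) z) has_derivative
      (\<lambda>z. (\<lambda>(h,\<xi>). inner \<xi> q0 - h * H t0 q0) z - blinfun_apply Dv z)) (at (t0, x0))"
    unfolding w_def by (intro has_derivative_diff Phi_has_derivative[OF t0] D)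
  then have "(\<lambda>z. (\<lambda>(h,\<xi>). inner \<xi> q0 - h * H t0 q0) z - blinfun_apply Dv z) = (\<lambda>z. 0)"
    using local_max by (intro differential_zero_maxmin[OF centre open_ball]) auto
  then have Dv_eq: "blinfun_apply Dv (h, \<xi>) = inner \<xi> q0 - h * H t0 q0" for h \<xi>
    by (metis (no_types, lifting) case_prod_conv eq_iff_diff_eq_0)
  have "time_deriv Dv = - H t0 q0" unfolding time_deriv_def using Dv_eq[of 1 0] by simp
  moreover have "grad_x Dv = q0"
    unfolding grad_x_def vec_eq_iff using Dv_eq by (simp add: inner_axis')
  ultimately show ?thesis by simp
qed

lemma u_increment_le:
  assumes "t0 \<in> {t1..T}" and "Phi t x q = ereal (u t x)"
  shows "u t x - u t0 x0 \<le> inner (x - x0) q - (G t q - G t0 q)"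
proof -
  obtain c where c: "fconj \<sigma> q = ereal c" "u t x = inner x q - c - G t q"
    using assms(2) by (rule Phi_maximizer_fconj)
  have "inner x0 q - c - G t0 q \<le> u t0 x0"
    using Phi_le_u[OF assms(1), of x0 q] by (simp add: Phi_eq_ereal[OF c(1)])
  then show ?thesis using c(2) by (simp add: inner_diff_left)
qed

lemma maximizer_directional_bound:
  assumes t0: "t0 \<in> {t1<..<T}"
    and D: "((\<lambda>(t,x). v t x) has_derivative blinfun_apply Dv) (at (t0, x0))"
    and loc_min: "\<exists>e>0. \<forall>t x. dist (t,x) (t0,x0) < e \<longrightarrow> u t0 x0 - v t0 x0 \<le> u t x - v t x"
  shows "\<exists>q. Phi t0 x0 q = ereal (u t0 x0) \<and> inner \<xi> (q - grad_x Dv) - H t0 q \<le> time_deriv Dv"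
proof -
  have t0': "t0 \<in> {t1..T}" using t0 by auto
  obtain r N where r: "r > 0" and bounded: "\<And>t x q. t \<in> {t1..T} \<Longrightarrow> \<bar>t - t0\<bar> + norm (x - x0) < r \<Longrightarrow>
      Phi t x q = ereal (u t x) \<Longrightarrow> norm q \<le> N"
    using Phi_maximizers_local[OF t0', of x0] by metis
  obtain e where e: "e > 0" "\<forall>t x. dist (t,x) (t0,x0) < e \<longrightarrow> u t0 x0 - v t0 x0 \<le> u t x - v t x"
    using loc_min by blast
  define m where "m = min (t0 - t1) (min e r)"
  define c where "c = m / (2 * (1 + norm \<xi>))"
  define s where "s k = c * inverse (real (Suc k))" for k
  have m: "m > 0" using t0 e r by (simp add: m_def)
  have c: "c > 0" "c * (1 + norm \<xi>) = m / 2"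
    using m norm_ge_zero[of \<xi>] by (simp_all add: c_def add_pos_nonneg field_simps add_nonneg_eq_0_iff)
  have s_pos: "s k > 0" for k using c by (simp add: s_def)
  have s_lim: "s \<longlonglongrightarrow> 0"
    unfolding s_def by (rule tendsto_mult_right_zero[OF LIMSEQ_inverse_real_of_nat])
  have ray_near: "\<bar>(t0 - s k) - t0\<bar> + norm ((x0 - s k *\<^sub>R \<xi>) - x0) < m" for k
  proof -
    have "s k \<le> c" using c(1) by (simp add: s_def mult_left_le inverse_le_1_iff)
    then have "s k * (1 + norm \<xi>) \<le> c * (1 + norm \<xi>)" by (simp add: mult_right_mono)
    then show ?thesis using s_pos[of k] c(2) m by (simp add: algebra_simps)
  qed
  have ray_in: "t0 - s k \<in> {t1..T}" for k
  proof -
    have "\<bar>(t0 - s k) - t0\<bar> + norm ((x0 - s k *\<^sub>R \<xi>) - x0) = s k + s k * norm \<xi>"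
      using s_pos[of k] by simp
    moreover have "0 \<le> s k * norm \<xi>" "m \<le> t0 - t1" using s_pos[of k] by (simp_all add: m_def)
    ultimately have "s k < t0 - t1" using ray_near[of k] by linarith
    then show ?thesis using s_pos[of k] t0 by auto
  qed
  have ray_close: "dist (t0 - s k, x0 - s k *\<^sub>R \<xi>) (t0, x0) < e" for k
    using norm_Pair_le[of "- s k" "- s k *\<^sub>R \<xi>"] ray_near[of k]
    by (simp add: dist_norm m_def)
  have "\<forall>k. \<exists>q. Phi (t0 - s k) (x0 - s k *\<^sub>R \<xi>) q = ereal (u (t0 - s k) (x0 - s k *\<^sub>R \<xi>))"
    using Phi_maximizer_exists ray_in by blast
  then obtain qs where qs: "\<And>k. Phi (t0 - s k) (x0 - s k *\<^sub>R \<xi>) (qs k) = ereal (u (t0 - s k) (x0 - s k *\<^sub>R \<xi>))"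
    by metis
  have quotient_le: "(v (t0 - s k) (x0 - s k *\<^sub>R \<xi>) - v t0 x0) / s k
      \<le> - inner \<xi> (qs k) + (G t0 (qs k) - G (t0 - s k) (qs k)) / s k" for k
  proof -
    have "v (t0 - s k) (x0 - s k *\<^sub>R \<xi>) - v t0 x0 \<le> u (t0 - s k) (x0 - s k *\<^sub>R \<xi>) - u t0 x0"
      using e(2) ray_close[of k] by fastforce
    also have "\<dots> \<le> s k * - inner \<xi> (qs k) + (G t0 (qs k) - G (t0 - s k) (qs k))"
      using u_increment_le[OF t0' qs[of k], of x0] by (simp add: inner_diff_left)
    finally have "(v (t0 - s k) (x0 - s k *\<^sub>R \<xi>) - v t0 x0) / s k
        \<le> (s k * - inner \<xi> (qs k) + (G t0 (qs k) - G (t0 - s k) (qs k))) / s k"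
      using s_pos[of k] by (simp add: divide_right_mono)
    also have "\<dots> = - inner \<xi> (qs k) + (G t0 (qs k) - G (t0 - s k) (qs k)) / s k"
      using s_pos[of k] by (simp add: add_divide_distrib diff_divide_distrib)
    finally show ?thesis .
  qed
  have "qs k \<in> cball 0 N" for k
  proof -
    have near: "\<bar>(t0 - s k) - t0\<bar> + norm ((x0 - s k *\<^sub>R \<xi>) - x0) < r"
      using ray_near[of k] by (simp add: m_def)
    show ?thesis using bounded[OF ray_in near qs] by simp
  qed
  then obtain l \<rho> where l: "strict_mono \<rho>" "(qs \<circ> \<rho>) \<longlonglongrightarrow> l"
    using seq_compactE[OF compact_imp_seq_compact[OF compact_cball]] by metis
  have s\<rho>: "(s \<circ> \<rho>) \<longlonglongrightarrow> 0" by (rule LIMSEQ_subseq_LIMSEQ[OF s_lim l(1)])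
  have "(\<lambda>k. (v (t0 - (s \<circ> \<rho>) k) (x0 - (s \<circ> \<rho>) k *\<^sub>R \<xi>) - v t0 x0) / (s \<circ> \<rho>) k)
      \<longlonglongrightarrow> - blinfun_apply Dv (1, \<xi>)"
    by (rule has_derivative_backward_quotient_seq[OF D _ s\<rho>]) (use s_pos in \<open>simp add: less_imp_neq[symmetric]\<close>)
  moreover have "(\<lambda>k. (G t0 ((qs \<circ> \<rho>) k) - G (t0 - (s \<circ> \<rho>) k) ((qs \<circ> \<rho>) k)) / (s \<circ> \<rho>) k) \<longlonglongrightarrow> H t0 l"
    by (rule G_backward_quotient_tendsto[OF _ _ _ s\<rho> l(2)]) (use t0 s_pos ray_in in auto)
  then have "(\<lambda>k. - inner \<xi> ((qs \<circ> \<rho>) k) + (G t0 ((qs \<circ> \<rho>) k) - G (t0 - (s \<circ> \<rho>) k) ((qs \<circ> \<rho>) k)) / (s \<circ> \<rho>) k)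
      \<longlonglongrightarrow> - inner \<xi> l + H t0 l"
    by (intro tendsto_add tendsto_minus tendsto_inner tendsto_const l(2))
  ultimately have "- blinfun_apply Dv (1, \<xi>) \<le> - inner \<xi> l + H t0 l"
    by (rule LIMSEQ_le) (use quotient_le in auto)
  then have "inner \<xi> (l - grad_x Dv) - H t0 l \<le> time_deriv Dv"
    using blinfun_apply_time_grad[of Dv 1 \<xi>] by (simp add: inner_diff_right inner_commute)
  moreover have "Phi t0 x0 l = ereal (u t0 x0)"
  proof (rule Phi_maximizer_limit[where tk="\<lambda>k. t0 - (s \<circ> \<rho>) k" and xk="\<lambda>k. x0 - (s \<circ> \<rho>) k *\<^sub>R \<xi>"])
    show "(\<lambda>k. t0 - (s \<circ> \<rho>) k) \<longlonglongrightarrow> t0" "(\<lambda>k. x0 - (s \<circ> \<rho>) k *\<^sub>R \<xi>) \<longlonglongrightarrow> x0"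
      using tendsto_diff[OF tendsto_const s\<rho>] tendsto_diff[OF tendsto_const tendsto_scaleR[OF s\<rho> tendsto_const]]
      by auto
  qed (use ray_in t0' qs l(2) in auto)
  ultimately show ?thesis by blast
qed

lemma H_jensen_gap_one_signed:
  assumes "finite S" "\<forall>q\<in>S. 0 \<le> l q" "sum l S = 1"
  shows "(\<forall>\<tau>\<in>{t1..T}. 0 \<le> (\<Sum>q\<in>S. l q * H \<tau> q) - H \<tau> (\<Sum>q\<in>S. l q *\<^sub>R q)) \<or>
         (\<forall>\<tau>\<in>{t1..T}. (\<Sum>q\<in>S. l q * H \<tau> q) - H \<tau> (\<Sum>q\<in>S. l q *\<^sub>R q) \<le> 0)"
proof -
  have nonempty: "S \<noteq> {}" using assms(3) by auto
  from A2 consider "\<forall>t\<in>{t1..T}. convex_on UNIV (H t)" | "\<forall>t\<in>{t1..T}. concave_on UNIV (H t)"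
    | (affine) g h k where "\<forall>t\<in>{t1..T}. \<forall>p. H t p = g t * h p + k t"
        "(\<forall>t\<in>{t1..T}. 0 \<le> g t) \<or> (\<forall>t\<in>{t1..T}. g t \<le> 0)"
    unfolding cond_A2_def by blast
  then show ?thesis
  proof cases
    case 1
    then show ?thesis using convex_on_sum[OF assms(1) nonempty _ assms(3)] assms(2) by fastforce
  next
    case 2
    then show ?thesis using concave_on_sum[OF assms(1) nonempty _ assms(3)] assms(2) by fastforce
  next
    case affine
    define c where "c = (\<Sum>q\<in>S. l q * h q) - h (\<Sum>q\<in>S. l q *\<^sub>R q)"
    have gap: "(\<Sum>q\<in>S. l q * H \<tau> q) - H \<tau> (\<Sum>q\<in>S. l q *\<^sub>R q) = g \<tau> * c" if "\<tau> \<in> {t1..T}" for \<tau>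
    proof -
      have "(\<Sum>q\<in>S. l q * H \<tau> q) = g \<tau> * (\<Sum>q\<in>S. l q * h q) + k \<tau> * sum l S"
        using affine(1) that by (simp add: algebra_simps sum.distrib sum_distrib_left)
      then show ?thesis using affine(1) that assms(3) by (simp add: c_def algebra_simps)
    qed
    consider "0 \<le> c" | "c \<le> 0" by linarith
    then show ?thesis
      using affine(2) by cases (auto simp: gap intro: mult_nonneg_nonneg mult_nonpos_nonneg
          mult_nonneg_nonpos mult_nonpos_nonpos)
  qed
qed

lemma G_jensen_on_maximizers:
  assumes t0: "t0 \<in> {t1..T}" and S: "finite S" "\<forall>q\<in>S. Phi t0 x0 q = ereal (u t0 x0)"
    and l: "\<forall>q\<in>S. 0 \<le> l q" "sum l S = 1"
  shows "(\<Sum>q\<in>S. l q * G t0 q) \<le> G t0 (\<Sum>q\<in>S. l q *\<^sub>R q)"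
proof -
  define p where "p = (\<Sum>q\<in>S. l q *\<^sub>R q)"
  have "\<exists>c. fconj \<sigma> q = ereal c \<and> u t0 x0 = inner x0 q - c - G t0 q" if "q \<in> S" for q
    using S(2) that by (metis Phi_maximizer_fconj)
  then obtain c where c: "\<And>q. q \<in> S \<Longrightarrow> fconj \<sigma> q = ereal (c q) \<and> u t0 x0 = inner x0 q - c q - G t0 q"
    by metis
  have "fconj \<sigma> p \<le> ereal (\<Sum>q\<in>S. l q * c q)"
    unfolding p_def by (rule fconj_convex_combination) (use S(1) l c in auto)
  then have "ereal (inner x0 p - G t0 p - (\<Sum>q\<in>S. l q * c q)) \<le> Phi t0 x0 p"
    by (simp add: ereal_le_Phi_iff)
  also have "\<dots> \<le> ereal (u t0 x0)" by (rule Phi_le_u[OF t0])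
  finally have "inner x0 p - G t0 p - (\<Sum>q\<in>S. l q * c q) \<le> u t0 x0" by simp
  moreover have "(\<Sum>q\<in>S. l q * c q) = (\<Sum>q\<in>S. l q * inner x0 q - l q * G t0 q - l q * u t0 x0)"
  proof (rule sum.cong[OF refl])
    fix q assume "q \<in> S"
    then have "c q = inner x0 q - G t0 q - u t0 x0" using c by force
    then show "l q * c q = l q * inner x0 q - l q * G t0 q - l q * u t0 x0"
      by (simp add: right_diff_distrib)
  qed
  then have "(\<Sum>q\<in>S. l q * c q) = inner x0 p - (\<Sum>q\<in>S. l q * G t0 q) - u t0 x0"
    using l(2) by (simp add: p_def sum_subtractf inner_sum_right sum_distrib_right[symmetric])
  ultimately show ?thesis by (simp add: p_def)
qed

lemma H_jensen_on_maximizers: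
  assumes t0: "t0 \<in> {t1<..<T}" and S: "finite S" "\<forall>q\<in>S. Phi t0 x0 q = ereal (u t0 x0)"
    and l: "\<forall>q\<in>S. 0 \<le> l q" "sum l S = 1"
  shows "(\<Sum>q\<in>S. l q * H t0 q) \<le> H t0 (\<Sum>q\<in>S. l q *\<^sub>R q)"
proof -
  define p where "p = (\<Sum>q\<in>S. l q *\<^sub>R q)"
  define \<phi> where "\<phi> \<tau> = (\<Sum>q\<in>S. l q * H \<tau> q) - H \<tau> p" for \<tau>
  have sub: "{t1..t0} \<subseteq> {t1..T}" using t0 by auto
  have int_l: "(\<lambda>\<tau>. l q * H \<tau> q) integrable_on {t1..t0}" for q
    using integrable_H[OF sub] by (rule integrable_on_mult_right)
  have "integral {t1..t0} \<phi>
      = integral {t1..t0} (\<lambda>\<tau>. \<Sum>q\<in>S. l q * H \<tau> q) - integral {t1..t0} (\<lambda>\<tau>. H \<tau> p)"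
    unfolding \<phi>_def by (rule integral_diff) (auto intro!: integrable_sum int_l integrable_H[OF sub] S(1))
  also have "\<dots> = (\<Sum>q\<in>S. l q * G t0 q) - G t0 p"
    unfolding G_def using int_l S(1) by (simp add: integral_sum)
  also have "\<dots> \<le> 0"
    using G_jensen_on_maximizers[OF _ S l] t0 by (simp add: p_def)
  finally have "\<phi> t0 \<le> 0"
    using integral_one_signed_nonpos_imp_nonpos[of t1 t0 \<phi>] H_jensen_gap_one_signed[OF S(1) l] t0 sub
    unfolding \<phi>_def p_def
    by (fastforce intro!: continuous_intros continuous_on_subset[OF continuous_on_H_time])
  then show ?thesis by (simp add: \<phi>_def p_def)
qed

lemma u_supersolution:
  assumes t0: "t0 \<in> {t1<..<T}"
    and D: "((\<lambda>(t,x). v t x) has_derivative blinfun_apply Dv) (at (t0, x0))"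
    and loc_min: "\<exists>e>0. \<forall>t x. dist (t,x) (t0,x0) < e \<longrightarrow> u t0 x0 - v t0 x0 \<le> u t x - v t x"
  shows "0 \<le> time_deriv Dv + H t0 (grad_x Dv)"
proof -
  have t0': "t0 \<in> {t1..T}" using t0 by auto
  define Q0 where "Q0 = {q. Phi t0 x0 q = ereal (u t0 x0)}"
  obtain r N where "r > 0" and local: "\<And>t x. t \<in> {t1..T} \<Longrightarrow> \<bar>t - t0\<bar> + norm (x - x0) < r \<Longrightarrow>
       (SUP q. Phi t x q) = ereal (u t x) \<and> (\<exists>q. Phi t x q = ereal (u t x)) \<and>
       (\<forall>q. Phi t x q = ereal (u t x) \<longrightarrow> norm q \<le> N)"
    using Phi_maximizers_local[OF t0', of x0] by blast
  then have bounded: "Phi t0 x0 q = ereal (u t0 x0) \<Longrightarrow> norm q \<le> N" for q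
    using local[OF t0', of x0] \<open>r > 0\<close> by simp
  have closed: "closed Q0"
    unfolding closed_sequential_limits
  proof (intro allI impI, elim conjE)
    fix qk q assume "\<forall>k. qk k \<in> Q0" "qk \<longlonglongrightarrow> q"
    then show "q \<in> Q0"
      using Phi_maximizer_limit[of "\<lambda>_. t0" t0 "\<lambda>_. x0" x0 qk q] t0' by (simp add: Q0_def)
  qed
  have "Q0 \<subseteq> cball 0 N" using bounded by (auto simp: Q0_def)
  then have "bounded Q0" by (rule bounded_subset[OF bounded_cball])
  with closed have compact: "compact Q0" by (simp add: compact_eq_bounded_closed)
  have continuous: "continuous_on Q0 (\<lambda>q. - H t0 q)"
    by (intro continuous_on_minus continuous_on_subset[OF continuous_on_H_space[OF t0']]) auto
  have directional: "\<exists>q\<in>Q0. inner \<xi> (q - grad_x Dv) + - H t0 q \<le> time_deriv Dv" for \<xi>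
    using maximizer_directional_bound[OF t0 D loc_min] unfolding Q0_def by auto
  obtain S l where S: "finite S" "S \<subseteq> Q0" "\<forall>q\<in>S. 0 \<le> l q" "sum l S = 1"
      "grad_x Dv = (\<Sum>q\<in>S. l q *\<^sub>R q)" "(\<Sum>q\<in>S. l q * - H t0 q) \<le> time_deriv Dv"
    using convex_combination_from_directional_bounds[OF compact continuous directional] by blast
  have "(\<Sum>q\<in>S. l q * H t0 q) \<le> H t0 (grad_x Dv)"
    unfolding S(5) by (rule H_jensen_on_maximizers[OF t0 S(1) _ S(3,4)]) (use S(2) Q0_def in auto)
  with S(6) show ?thesis by (simp add: sum_negf)
qed

end

theorem proposition3p2:
  fixes \<sigma> :: "real^'n \<Rightarrow> real"
    and H :: "real \<Rightarrow> real^'n \<Rightarrow> real"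
    and t1 T :: real
  assumes "0 < t1" and "t1 < T"
    and "convex_on UNIV \<sigma>"
    and "\<exists>DH. (\<forall>z\<in>{t1..T} \<times> UNIV.
                 ((\<lambda>(t,p). H t p) has_derivative blinfun_apply (DH z)) (at z within {t1..T} \<times> UNIV))
             \<and> continuous_on ({t1..T} \<times> UNIV) DH"
    and "cond_A1 \<sigma> H t1 T"
    and "cond_A2 H t1 T"
  shows "\<exists>u :: real \<Rightarrow> real^'n \<Rightarrow> real.
           (\<forall>t\<in>{t1..T}. \<forall>x.
              ereal (u t x) = (SUP q. ereal (inner x q) - fconj \<sigma> q
                                      - ereal (integral {t1..t} (\<lambda>\<tau>. H \<tau> q))) \<and>
              (\<exists>q. ereal (u t x) = ereal (inner x q) - fconj \<sigma> q
                                      - ereal (integral {t1..t} (\<lambda>\<tau>. H \<tau> q)))) \<and>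
           viscosity_solution H t1 T \<sigma> u"
proof -
  have "continuous_on ({t1..T} \<times> UNIV) (\<lambda>(t,p). H t p)"
    using assms(4) has_derivative_continuous unfolding continuous_on_eq_continuous_within by blast
  then interpret hopf_formula \<sigma> H t1 T
    by unfold_locales (use assms in auto)
  have "viscosity_solution H t1 T \<sigma> u"
    unfolding viscosity_solution_def
    using continuous_on_u u_initial u_subsolution u_supersolution by blast
  moreover have "ereal (u t x) = (SUP q. Phi t x q)" "\<exists>q. ereal (u t x) = Phi t x q"
    if "t \<in> {t1..T}" for t x
    using SUP_Phi_eq_u[OF that] Phi_maximizer_exists[OF that] by metis+
  ultimately show ?thesis unfolding Phi_def G_def by blast
qed

end
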